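(* Let $P$ be a $K\times K$ substochastic matrix with $\rho(P)<1$, and let $\mu,\lambda,N\in\mathbb{R}_+^K$. Consider the linear network $\mathbf{N}^{(i)}(t)=N^{(i)}+\lambda^{(i)}t$, $\mathbf{S}^{(i)}(t)=\mu^{(i)}t$, $\mathbf{P}^{(i,j)}(t)=P^{(i,j)}t$. Then the fixed point equation $\mathbf{A}=\Gamma(\mathbf{D},\mathbf{P},\mathbf{N})$, $\mathbf{D}=\Phi(\mathbf{A},\mathbf{S})$ has a unique solution $(\mathbf{A},\mathbf{D})\in\mathbb{D}(\mathbb{R}_+^K)\times\mathbb{D}_0(\mathbb{R}_+^K)$, given by $\mathbf{A}(t)=x(\mu t,P,N+\lambda t)$ and $\mathbf{D}^{(i)}(t)=\mathbf{A}^{(i)}(t)\wedge\mu^{(i)}t$.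
   Context: $\mathbb{D}(\mathbb{R}_+^K)$: càdlàg componentwise non-decreasing functions $\mathbb{R}_+\to\mathbb{R}_+^K$; $\mathbb{D}_0$: those vanishing at $0$. $\rho$ denotes the spectral radius. For $X\in\mathbb{D}_0(\mathbb{R}_+^K)$, $\mathbf{P}=(\mathbf{P}^{(i,j)})$ with $\mathbf{P}^{(i,j)}\in\mathbb{D}_0(\mathbb{R}_+)$, and $\mathbf{N}\in\mathbb{D}(\mathbb{R}_+^K)$: $\Gamma(X,\mathbf{P},\mathbf{N})^{(i)}(t)=\mathbf{N}^{(i)}(t)+\sum_{j=1}^K\mathbf{P}^{(j,i)}(X^{(j)}(t))$. For $X\in\mathbb{D}(\mathbb{R}_+^K)$, $Y\in\mathbb{D}_0(\mathbb{R}_+^K)$: $\Phi(X,Y)^{(i)}(t)=\inf_{0\le s\le t}\{Y^{(i)}(t)-Y^{(i)}(s)+X^{(i)}(s)\}\wedge Y^{(i)}(t)$. For a substochastic $P$ with $\rho(P)<1$ and $(\alpha,y)\in\mathbb{R}_+^{2K}$, $x(y,P,\alpha)\in\mathbb{R}_+^K$ denotes the unique solution of $x^{(i)}=\alpha^{(i)}+\sum_{j=1}^KP^{(j,i)}(x^{(j)}\wedge y^{(j)})$, $1\le i\le K$ (this solution exists, is unique, and is continuous and non-decreasing in $(y,\alpha)$). Here $\mu t$ denotes the vector $(\mu^{(i)}t)_i$. *)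

theory Defs
  imports "Jordan_Normal_Form.Spectral_Radius"
begin

(* Time domain R_+ is represented by real numbers t with t >= 0; values of
   paths at negative times are irrelevant.  Vectors in R_+^K are functions
   nat => real, of which only indices i < K matter. *)

definition cadlag1 :: "(real \<Rightarrow> real) \<Rightarrow> bool" where
  "cadlag1 f \<longleftrightarrow> (\<forall>t\<ge>0. continuous (at_right t) f) \<and>
                   (\<forall>t>0. \<exists>l. (f \<longlongrightarrow> l) (at_left t))"

definition D1 :: "(real \<Rightarrow> real) set" where
  "D1 = {f. cadlag1 f \<and> (\<forall>s t. 0 \<le> s \<longrightarrow> s \<le> t \<longrightarrow> f s \<le> f t) \<and> (\<forall>t\<ge>0. 0 \<le> f t)}"

definition D0_1 :: "(real \<Rightarrow> real) set" where
  "D0_1 = {f. f \<in> D1 \<and> f 0 = 0}"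

definition DK :: "nat \<Rightarrow> (real \<Rightarrow> nat \<Rightarrow> real) set" where
  "DK K = {X. \<forall>i<K. (\<lambda>t. X t i) \<in> D1}"

definition D0K :: "nat \<Rightarrow> (real \<Rightarrow> nat \<Rightarrow> real) set" where
  "D0K K = {X. \<forall>i<K. (\<lambda>t. X t i) \<in> D0_1}"

definition Gamma :: "nat \<Rightarrow> (real \<Rightarrow> nat \<Rightarrow> real) \<Rightarrow> (nat \<Rightarrow> nat \<Rightarrow> real \<Rightarrow> real)
                     \<Rightarrow> (real \<Rightarrow> nat \<Rightarrow> real) \<Rightarrow> real \<Rightarrow> nat \<Rightarrow> real" where
  "Gamma K X PP NN t i = NN t i + (\<Sum>j<K. PP j i (X t j))"

definition Phi :: "(real \<Rightarrow> nat \<Rightarrow> real) \<Rightarrow> (real \<Rightarrow> nat \<Rightarrow> real) \<Rightarrow> real \<Rightarrow> nat \<Rightarrow> real" where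
  "Phi X Y t i = min (INF s\<in>{0..t}. Y t i - Y s i + X s i) (Y t i)"

definition substochastic :: "nat \<Rightarrow> real mat \<Rightarrow> bool" where
  "substochastic K P \<longleftrightarrow> P \<in> carrier_mat K K \<and>
     (\<forall>i<K. \<forall>j<K. 0 \<le> P $$ (i,j)) \<and> (\<forall>i<K. (\<Sum>j<K. P $$ (i,j)) \<le> 1)"

definition xsol :: "nat \<Rightarrow> (nat \<Rightarrow> real) \<Rightarrow> real mat \<Rightarrow> (nat \<Rightarrow> real) \<Rightarrow> (nat \<Rightarrow> real)" where
  "xsol K y P \<alpha> = (THE x. (\<forall>i. K \<le> i \<longrightarrow> x i = 0) \<and> (\<forall>i<K. 0 \<le> x i) \<and>
      (\<forall>i<K. x i = \<alpha> i + (\<Sum>j<K. P $$ (j,i) * min (x j) (y j))))"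

end

(*
  A nonnegative matrix P whose powers tend to zero (here: spectral radius below one) admits a
  vector v >= 0 with P^T v + 1 <= v, a truncated Neumann series of column sums. Against v every
  subinvariant vector d <= P^T d + e satisfies d <= e v (look at the largest ratio d_i / v_i).
  This maximum principle gives existence, uniqueness, monotonicity and Lipschitz dependence on the
  data for the solution x(y, P, alpha) of x = alpha + P^T (x /\ y).

  For the linear network A(t) = x(mu t, P, N + lambda t) is therefore nonnegative, nondecreasing
  and continuous, and comparison with the scaled path (s/t) A(t) shows that A(t)/t is
  nonincreasing. The latter makes the reflection Phi(A, mu .)(t) collapse to A(t) /\ mu t, so
  (A, A /\ mu .) solves the fixed point equation. Conversely, for any solution the sup-distances
  to A on [0, t] form a P^T-subinvariant vector, because Phi is 1-Lipschitz for the sup norm;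
  hence they vanish.
*)
theory Submission
  imports Defs
begin

section \<open>Powers of a matrix with spectral radius below one\<close>

lemma smult_pow_mat:
  fixes A :: "'a :: comm_ring_1 mat"
  assumes A: "A \<in> carrier_mat n n"
  shows "(k \<cdot>\<^sub>m A) ^\<^sub>m m = k ^ m \<cdot>\<^sub>m (A ^\<^sub>m m)"
proof (induction m)
  case 0
  show ?case using A by (intro eq_matI) auto
next
  case (Suc m)
  have Am: "A ^\<^sub>m m \<in> carrier_mat n n" using A by simp
  have "(k \<cdot>\<^sub>m A) ^\<^sub>m Suc m = (k ^ m \<cdot>\<^sub>m A ^\<^sub>m m) * (k \<cdot>\<^sub>m A)"
    by (simp add: Suc.IH)
  also have "\<dots> = k ^ m \<cdot>\<^sub>m (k \<cdot>\<^sub>m (A ^\<^sub>m m * A))"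
    using mult_smult_assoc_mat[OF Am, of "k \<cdot>\<^sub>m A" n "k ^ m"] mult_smult_distrib[OF Am A, of k] A
    by simp
  also have "\<dots> = k ^ Suc m \<cdot>\<^sub>m (A ^\<^sub>m Suc m)"
    by (intro eq_matI) (auto simp: mult.assoc)
  finally show ?case .
qed

lemma eigenvalue_smult_mat:
  fixes A :: "'a :: field mat"
  assumes A: "A \<in> carrier_mat n n" and k: "k \<noteq> 0" and ev: "eigenvalue (k \<cdot>\<^sub>m A) e"
  shows "eigenvalue A (e / k)"
proof -
  obtain w where w: "w \<in> carrier_vec n" "w \<noteq> 0\<^sub>v n" "(k \<cdot>\<^sub>m A) *\<^sub>v w = e \<cdot>\<^sub>v w"
    using ev A unfolding eigenvalue_def eigenvector_def by auto
  have "A *\<^sub>v w = (e / k) \<cdot>\<^sub>v w"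
  proof (intro eq_vecI)
    fix i assume "i < dim_vec ((e / k) \<cdot>\<^sub>v w)"
    then have i: "i < n" using w(1) by simp
    have "((k \<cdot>\<^sub>m A) *\<^sub>v w) $ i = (e \<cdot>\<^sub>v w) $ i" using w(3) by simp
    then show "(A *\<^sub>v w) $ i = ((e / k) \<cdot>\<^sub>v w) $ i"
      using i A w(1) k by (simp add: field_simps)
  qed (use A w(1) in simp)
  then show ?thesis
    using w A unfolding eigenvalue_def eigenvector_def by auto
qed

lemma spectral_radius_smult_le:
  fixes A :: "complex mat"
  assumes A: "A \<in> carrier_mat n n" and n: "0 < n" and c: "0 < c"
  shows "spectral_radius (complex_of_real c \<cdot>\<^sub>m A) \<le> c * spectral_radius A"
proof -
  obtain e where e: "eigenvalue (complex_of_real c \<cdot>\<^sub>m A) e"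
    and rho: "spectral_radius (complex_of_real c \<cdot>\<^sub>m A) = norm e"
    using spectral_radius_mem_max(1)[of "complex_of_real c \<cdot>\<^sub>m A" n] A n
    unfolding spectrum_def by auto
  have "eigenvalue A (e / complex_of_real c)"
    using eigenvalue_smult_mat[OF A _ e] c by simp
  then have "norm (e / complex_of_real c) \<le> spectral_radius A"
    using spectral_radius_mem_max(2)[OF A n] unfolding spectrum_def by auto
  then have "norm e / c \<le> spectral_radius A"
    using c by (simp add: norm_divide)
  then show ?thesis using rho c by (simp add: divide_le_eq mult.commute)
qed

lemma pow_mat_tendsto_zero:
  fixes A :: "complex mat"
  assumes A: "A \<in> carrier_mat n n" and rho: "spectral_radius A < 1" and i: "i < n" and j: "j < n"
  shows "(\<lambda>k. (A ^\<^sub>m k) $$ (i,j)) \<longlonglongrightarrow> 0"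
proof -
  \<comment> \<open>\<open>c > 1\<close> but \<open>c \<cdot> \<rho>(A) < 1\<close>: the powers of \<open>c A\<close> are bounded, so those of \<open>A\<close> decay like \<open>c\<^sup>-\<^sup>k\<close>\<close>
  define c where "c = 2 / (1 + max (spectral_radius A) 0)"
  have c1: "1 < c" using rho by (simp add: c_def field_simps)
  have "spectral_radius (complex_of_real c \<cdot>\<^sub>m A) \<le> c * spectral_radius A"
    using spectral_radius_smult_le[OF A _, of c] i c1 by simp
  also have "\<dots> \<le> c * max (spectral_radius A) 0"
    using c1 by (intro mult_left_mono) auto
  also have "\<dots> < 1" using rho by (simp add: c_def field_simps)
  finally obtain B where B: "\<And>k. norm_bound ((complex_of_real c \<cdot>\<^sub>m A) ^\<^sub>m k) B"
    using spectral_radius_jnf_norm_bound_less_1_upper_triangular[of _ n] A by (metis smult_carrier_mat)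
  have "norm ((A ^\<^sub>m k) $$ (i,j)) \<le> norm (inverse (c ^ k)) * B" for k
  proof -
    have "norm (complex_of_real (c ^ k) * (A ^\<^sub>m k) $$ (i,j)) \<le> B"
      using B[of k] A i j unfolding norm_bound_def smult_pow_mat[OF A] by auto
    then show ?thesis using c1 by (simp add: norm_mult norm_power field_simps)
  qed
  then show ?thesis
    by (intro tendsto_0_le[OF LIMSEQ_inverse_realpow_zero[OF c1], of _ B] always_eventually) auto
qed

lemma pow_mat_Suc_index:
  fixes P :: "'a :: comm_semiring_1 mat"
  assumes P: "P \<in> carrier_mat K K" and l: "l < K" and i: "i < K"
  shows "(P ^\<^sub>m Suc k) $$ (l,i) = (\<Sum>j<K. (P ^\<^sub>m k) $$ (l,j) * P $$ (j,i))"
  using P l i by (simp add: scalar_prod_def atLeast0LessThan)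

lemma pow_mat_nonneg:
  fixes P :: "'a :: linordered_semidom mat"
  assumes P: "P \<in> carrier_mat K K" and nonneg: "\<And>i j. i < K \<Longrightarrow> j < K \<Longrightarrow> 0 \<le> P $$ (i,j)"
    and "l < K" "i < K"
  shows "0 \<le> (P ^\<^sub>m k) $$ (l,i)"
  using assms(4)
proof (induction k arbitrary: i)
  case 0
  then show ?case using P \<open>l < K\<close> by simp
next
  case (Suc k)
  show ?case
    unfolding pow_mat_Suc_index[OF P \<open>l < K\<close> Suc.prems]
    by (intro sum_nonneg mult_nonneg_nonneg) (simp_all add: Suc.IH nonneg Suc.prems)
qed


section \<open>Lyapunov vectors and the traffic equation\<close>

lemma abs_min_diff_le: "\<bar>min a b - min c d\<bar> \<le> \<bar>a - c\<bar> + \<bar>b - d\<bar>" for a b c d :: real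
  by (simp add: min_def abs_if)

definition traffic :: "nat \<Rightarrow> (nat \<Rightarrow> real) \<Rightarrow> real mat \<Rightarrow> (nat \<Rightarrow> real) \<Rightarrow> (nat \<Rightarrow> real) \<Rightarrow> nat \<Rightarrow> real"
  where "traffic K y P \<alpha> x i = \<alpha> i + (\<Sum>j<K. P $$ (j,i) * min (x j) (y j))"

locale lyapunov =
  fixes K :: nat and P :: "real mat" and v :: "nat \<Rightarrow> real"
  assumes P_nonneg: "\<And>i j. i < K \<Longrightarrow> j < K \<Longrightarrow> 0 \<le> P $$ (i,j)"
    and v_nonneg: "\<And>i. i < K \<Longrightarrow> 0 \<le> v i"
    and v_drift: "\<And>i. i < K \<Longrightarrow> (\<Sum>j<K. P $$ (j,i) * v j) + 1 \<le> v i"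
begin

lemma v_ge_1: "i < K \<Longrightarrow> 1 \<le> v i"
  using v_drift[of i] sum_nonneg[of "{..<K}" "\<lambda>j. P $$ (j,i) * v j"] P_nonneg v_nonneg
  by simp

lemma subinvariant_nonpos:
  assumes sub: "\<And>i. i < K \<Longrightarrow> w i \<le> (\<Sum>j<K. P $$ (j,i) * w j)" and i: "i < K"
  shows "w i \<le> 0"
proof -
  \<comment> \<open>the largest ratio \<open>w j / v j\<close> cannot be positive, since \<open>P\<^sup>T v\<close> falls short of \<open>v\<close>\<close>
  define m where "m = Max ((\<lambda>j. w j / v j) ` {..<K})"
  have v_pos: "0 < v j" if "j < K" for j
    using v_ge_1[OF that] by simp
  obtain j0 where j0: "j0 < K" "m = w j0 / v j0"
    using Max_in[of "(\<lambda>j. w j / v j) ` {..<K}"] i unfolding m_def by fastforce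
  have w_le: "w j \<le> m * v j" if "j < K" for j
    using Max_ge[of "(\<lambda>j. w j / v j) ` {..<K}" "w j / v j"] that v_pos[OF that]
    by (simp add: m_def divide_le_eq)
  have "m \<le> 0"
  proof (rule ccontr)
    assume "\<not> m \<le> 0"
    have "m * v j0 = w j0" using j0 v_pos[of j0] by simp
    also have "\<dots> \<le> (\<Sum>j<K. P $$ (j,j0) * w j)" by (rule sub[OF j0(1)])
    also have "\<dots> \<le> (\<Sum>j<K. P $$ (j,j0) * (m * v j))"
      using w_le P_nonneg j0(1) by (intro sum_mono mult_left_mono) auto
    also have "\<dots> = m * (\<Sum>j<K. P $$ (j,j0) * v j)"
      by (simp add: sum_distrib_left algebra_simps)
    also have "\<dots> \<le> m * (v j0 - 1)"
      using v_drift[OF j0(1)] \<open>\<not> m \<le> 0\<close> by (intro mult_left_mono) auto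
    finally show False using \<open>\<not> m \<le> 0\<close> by (simp add: algebra_simps)
  qed
  then show ?thesis
    using w_le[OF i] v_pos[OF i] by (simp add: mult_nonpos_nonneg order_trans)
qed

lemma subinvariant_le:
  assumes sub: "\<And>i. i < K \<Longrightarrow> d i \<le> (\<Sum>j<K. P $$ (j,i) * d j) + e"
    and e: "0 \<le> e" and i: "i < K"
  shows "d i \<le> e * v i"
proof -
  have "d i - e * v i \<le> (\<Sum>j<K. P $$ (j,i) * (d j - e * v j))" if i: "i < K" for i
  proof -
    have "e * (\<Sum>j<K. P $$ (j,i) * v j) + e \<le> e * v i"
      using mult_left_mono[OF v_drift[OF i] e] by (simp add: algebra_simps)
    then show ?thesis
      using sub[OF i] by (simp add: sum_subtractf sum_distrib_left algebra_simps)
  qed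
  from subinvariant_nonpos[OF this i] show ?thesis by simp
qed

lemma traffic_comparison:
  assumes sub: "\<And>i. i < K \<Longrightarrow> g i \<le> traffic K y P \<alpha> g i"
    and super: "\<And>i. i < K \<Longrightarrow> traffic K y' P \<alpha>' x i \<le> x i"
    and le: "\<And>i. i < K \<Longrightarrow> \<alpha> i \<le> \<alpha>' i \<and> y i \<le> y' i" and i: "i < K"
  shows "g i \<le> x i"
proof -
  define d where "d j = max (g j - x j) 0" for j
  have "d i \<le> (\<Sum>j<K. P $$ (j,i) * d j)" if i: "i < K" for i
  proof (cases "g i \<le> x i")
    case True
    then show ?thesis
      using P_nonneg i by (auto simp: d_def intro!: sum_nonneg)
  next
    case False
    have "d i \<le> traffic K y P \<alpha> g i - traffic K y' P \<alpha>' x i"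
      using False sub[OF i] super[OF i] by (simp add: d_def)
    also have "\<dots> \<le> (\<Sum>j<K. P $$ (j,i) * (min (g j) (y j) - min (x j) (y' j)))"
      using le[OF i] by (simp add: traffic_def sum_subtractf algebra_simps)
    also have "\<dots> \<le> (\<Sum>j<K. P $$ (j,i) * d j)"
    proof (intro sum_mono mult_left_mono)
      fix j assume "j \<in> {..<K}"
      then show "min (g j) (y j) - min (x j) (y' j) \<le> d j" "0 \<le> P $$ (j,i)"
        using le[of j] P_nonneg i by (auto simp: d_def)
    qed
    finally show ?thesis .
  qed
  from subinvariant_nonpos[OF this i] show ?thesis by (simp add: d_def)
qed

lemma traffic_fixpoint_unique:
  assumes x: "\<And>i. i < K \<Longrightarrow> x i = traffic K y P \<alpha> x i"
    and x': "\<And>i. i < K \<Longrightarrow> x' i = traffic K y P \<alpha> x' i" and i: "i < K"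
  shows "x i = x' i"
  using traffic_comparison[of x y \<alpha> y \<alpha> x' i] traffic_comparison[of x' y \<alpha> y \<alpha> x i] x x' i
  by fastforce

lemma traffic_fixpoint_exists:
  assumes \<alpha>: "\<And>i. i < K \<Longrightarrow> 0 \<le> \<alpha> i" and y: "\<And>i. i < K \<Longrightarrow> 0 \<le> y i"
  shows "\<exists>x. \<forall>i<K. 0 \<le> x i \<and> x i = traffic K y P \<alpha> x i"
proof -
  let ?T = "traffic K y P \<alpha>"
  define xs where "xs n = (?T ^^ n) (\<lambda>_. 0)" for n
  have xs_Suc: "xs (Suc n) = ?T (xs n)" for n
    by (simp add: xs_def)
  have T_mono: "?T x i \<le> ?T x' i" if "\<And>j. j < K \<Longrightarrow> x j \<le> x' j" and "i < K" for x x' i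
    unfolding traffic_def using that P_nonneg
    by (auto intro!: sum_mono mult_left_mono min.mono)
  have xs_inc: "xs n i \<le> xs (Suc n) i" if "i < K" for n i
    using that
  proof (induction n arbitrary: i)
    case 0
    then show ?case using \<alpha> y by (simp add: xs_def traffic_def)
  next
    case (Suc n)
    then show ?case unfolding xs_Suc[of "Suc n"] xs_Suc[of n] by (intro T_mono)
  qed
  define e where "e = (\<Sum>i<K. \<alpha> i)"
  have e: "0 \<le> e" "\<And>i. i < K \<Longrightarrow> \<alpha> i \<le> e"
    unfolding e_def using \<alpha> by (auto intro: sum_nonneg member_le_sum)
  have xs_bound: "xs n i \<le> e * v i" if i: "i < K" for n i
  proof (cases n)
    case 0
    then show ?thesis using e v_nonneg[OF i] by (simp add: xs_def)
  next
    case (Suc m)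
    have "xs (Suc m) j \<le> (\<Sum>l<K. P $$ (l,j) * xs (Suc m) l) + e" if j: "j < K" for j
    proof -
      have "(\<Sum>l<K. P $$ (l,j) * min (xs m l) (y l)) \<le> (\<Sum>l<K. P $$ (l,j) * xs (Suc m) l)"
        using xs_inc P_nonneg j by (intro sum_mono mult_left_mono) (auto intro: min.coboundedI1)
      then show ?thesis using e(2)[OF j] by (simp add: xs_Suc traffic_def)
    qed
    then show ?thesis using subinvariant_le[OF _ e(1) i] Suc by blast
  qed
  define x where "x i = (SUP n. xs n i)" for i
  have xs_lim: "(\<lambda>n. xs n i) \<longlonglongrightarrow> x i" if i: "i < K" for i
    unfolding x_def using xs_bound[OF i] xs_inc[OF i]
    by (intro LIMSEQ_incseq_SUP bdd_aboveI2 incseq_SucI) auto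
  have "0 \<le> x i \<and> x i = ?T x i" if i: "i < K" for i
  proof
    have "incseq (\<lambda>n. xs n i)" using xs_inc[OF i] by (rule incseq_SucI)
    from incseq_le[OF this xs_lim[OF i], of 0] show "0 \<le> x i" by (simp add: xs_def)
    have "(\<lambda>n. xs (Suc n) i) \<longlonglongrightarrow> ?T x i"
      unfolding xs_Suc traffic_def by (intro tendsto_intros xs_lim) auto
    with LIMSEQ_Suc[OF xs_lim[OF i]] show "x i = ?T x i" by (rule LIMSEQ_unique)
  qed
  then show ?thesis by blast
qed

lemma xsol_traffic:
  assumes \<alpha>: "\<And>i. i < K \<Longrightarrow> 0 \<le> \<alpha> i" and y: "\<And>i. i < K \<Longrightarrow> 0 \<le> y i" and i: "i < K"
  shows "0 \<le> xsol K y P \<alpha> i" "xsol K y P \<alpha> i = traffic K y P \<alpha> (xsol K y P \<alpha>) i"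
proof -
  obtain x where x: "\<And>i. i < K \<Longrightarrow> 0 \<le> x i \<and> x i = traffic K y P \<alpha> x i"
    using traffic_fixpoint_exists[of \<alpha> y, OF \<alpha> y] by blast
  \<comment> \<open>\<^const>\<open>xsol\<close> also normalises the components with index \<open>\<ge> K\<close> to 0\<close>
  define x0 where "x0 i = (if i < K then x i else 0)" for i
  have "traffic K y P \<alpha> x0 = traffic K y P \<alpha> x"
    unfolding traffic_def x0_def by (intro ext sum.cong) auto
  then have x0: "0 \<le> x0 i \<and> x0 i = traffic K y P \<alpha> x0 i" if "i < K" for i
    using x[OF that] that by (simp add: x0_def)
  have "xsol K y P \<alpha> = x0"
    unfolding xsol_def traffic_def[symmetric]
  proof (rule the_equality)
    have "\<forall>i. K \<le> i \<longrightarrow> x0 i = 0" by (simp add: x0_def)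
    with x0 show "(\<forall>i. K \<le> i \<longrightarrow> x0 i = 0) \<and> (\<forall>i<K. 0 \<le> x0 i) \<and> (\<forall>i<K. x0 i = traffic K y P \<alpha> x0 i)"
      by blast
    fix x' assume "(\<forall>i. K \<le> i \<longrightarrow> x' i = 0) \<and> (\<forall>i<K. 0 \<le> x' i) \<and> (\<forall>i<K. x' i = traffic K y P \<alpha> x' i)"
    then show "x' = x0"
      using traffic_fixpoint_unique[of x' y \<alpha> x0] x0 by (auto simp: x0_def not_less)
  qed
  then show "0 \<le> xsol K y P \<alpha> i" "xsol K y P \<alpha> i = traffic K y P \<alpha> (xsol K y P \<alpha>) i"
    using x0[OF i] by simp_all
qed

lemma traffic_fixpoint_lipschitz:
  assumes x: "\<And>i. i < K \<Longrightarrow> x i = traffic K y P \<alpha> x i"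
    and x': "\<And>i. i < K \<Longrightarrow> x' i = traffic K y' P \<alpha>' x' i"
    and e: "\<And>i. i < K \<Longrightarrow> \<bar>\<alpha> i - \<alpha>' i\<bar> + (\<Sum>j<K. P $$ (j,i) * \<bar>y j - y' j\<bar>) \<le> e"
    and i: "i < K"
  shows "\<bar>x i - x' i\<bar> \<le> e * v i"
proof -
  have "0 \<le> (\<Sum>j<K. P $$ (j,i) * \<bar>y j - y' j\<bar>)"
    using P_nonneg i by (auto intro!: sum_nonneg)
  then have e0: "0 \<le> e"
    using e[OF i] abs_ge_zero[of "\<alpha> i - \<alpha>' i"] by linarith
  have "\<bar>x i - x' i\<bar> \<le> (\<Sum>j<K. P $$ (j,i) * \<bar>x j - x' j\<bar>) + e" if i: "i < K" for i
  proof -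
    let ?dmin = "\<lambda>j. min (x j) (y j) - min (x' j) (y' j)"
    have "x i - x' i = traffic K y P \<alpha> x i - traffic K y' P \<alpha>' x' i"
      using x[OF i] x'[OF i] by simp
    also have "\<dots> = (\<alpha> i - \<alpha>' i) + (\<Sum>j<K. P $$ (j,i) * ?dmin j)"
      by (simp add: traffic_def sum_subtractf algebra_simps)
    finally have "x i - x' i = (\<alpha> i - \<alpha>' i) + (\<Sum>j<K. P $$ (j,i) * ?dmin j)" .
    then have "\<bar>x i - x' i\<bar> \<le> \<bar>\<alpha> i - \<alpha>' i\<bar> + \<bar>\<Sum>j<K. P $$ (j,i) * ?dmin j\<bar>"
      by (simp only: abs_triangle_ineq)
    also have "\<dots> \<le> \<bar>\<alpha> i - \<alpha>' i\<bar> + (\<Sum>j<K. \<bar>P $$ (j,i) * ?dmin j\<bar>)"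
      by (intro add_left_mono sum_abs)
    also have "\<dots> \<le> \<bar>\<alpha> i - \<alpha>' i\<bar> + (\<Sum>j<K. P $$ (j,i) * (\<bar>x j - x' j\<bar> + \<bar>y j - y' j\<bar>))"
    proof (intro add_left_mono sum_mono)
      fix j assume "j \<in> {..<K}"
      then have "0 \<le> P $$ (j,i)" using P_nonneg i by simp
      then show "\<bar>P $$ (j,i) * ?dmin j\<bar> \<le> P $$ (j,i) * (\<bar>x j - x' j\<bar> + \<bar>y j - y' j\<bar>)"
        unfolding abs_mult by (simp add: mult_left_mono abs_min_diff_le)
    qed
    also have "\<dots> \<le> (\<Sum>j<K. P $$ (j,i) * \<bar>x j - x' j\<bar>) + e"
      using e[OF i] by (simp add: distrib_left sum.distrib)
    finally show ?thesis .
  qed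
  then show ?thesis by (rule subinvariant_le[OF _ e0 i])
qed

end

lemma ex_lyapunov_if_pow_mat_tendsto_zero:
  fixes P :: "real mat"
  assumes P: "P \<in> carrier_mat K K" and nonneg: "\<And>i j. i < K \<Longrightarrow> j < K \<Longrightarrow> 0 \<le> P $$ (i,j)"
    and pow_lim: "\<And>i j. i < K \<Longrightarrow> j < K \<Longrightarrow> (\<lambda>k. (P ^\<^sub>m k) $$ (i,j)) \<longlonglongrightarrow> 0"
  shows "\<exists>v. lyapunov K P v"
proof -
  define colsum where "colsum k i = (\<Sum>l<K. (P ^\<^sub>m k) $$ (l,i))" for k i
  have colsum_Suc: "(\<Sum>j<K. P $$ (j,i) * colsum k j) = colsum (Suc k) i" if i: "i < K" for k i
  proof -
    have "colsum (Suc k) i = (\<Sum>l<K. \<Sum>j<K. (P ^\<^sub>m k) $$ (l,j) * P $$ (j,i))"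
      unfolding colsum_def by (rule sum.cong[OF refl], rule pow_mat_Suc_index[OF P _ i]) simp
    then show ?thesis
      unfolding colsum_def sum_distrib_left by (subst sum.swap) (simp add: mult.commute)
  qed
  have colsum_0: "colsum 0 i = 1" if "i < K" for i
  proof -
    have "colsum 0 i = (\<Sum>l<K. if l = i then 1 else 0)"
      unfolding colsum_def using that P by (intro sum.cong) auto
    then show ?thesis using that by simp
  qed
  have colsum_lim: "(\<lambda>k. colsum k i) \<longlonglongrightarrow> 0" if "i < K" for i
    unfolding colsum_def using pow_lim that by (intro tendsto_null_sum) auto
  have "\<forall>\<^sub>F k in sequentially. \<forall>i\<in>{..<K}. colsum k i < 1/2"
    using colsum_lim by (intro eventually_ball_finite ballI order_tendstoD(2)) auto
  then obtain n where n: "\<And>i. i < K \<Longrightarrow> colsum n i < 1/2"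
    by (auto simp: eventually_sequentially)
  \<comment> \<open>a truncated Neumann series: \<open>P\<^sup>T v = v - 2 colsum 0 + 2 colsum n\<close> telescopes\<close>
  define v where "v i = 2 * (\<Sum>k<n. colsum k i)" for i
  have "0 \<le> v i \<and> (\<Sum>j<K. P $$ (j,i) * v j) + 1 \<le> v i" if i: "i < K" for i
  proof
    show "0 \<le> v i"
      unfolding v_def colsum_def using pow_mat_nonneg[OF P nonneg] i
      by (auto intro!: sum_nonneg)
    have "(\<Sum>j<K. P $$ (j,i) * v j) = 2 * (\<Sum>k<n. colsum (Suc k) i)"
      unfolding v_def sum_distrib_left colsum_Suc[OF i, symmetric]
      by (subst sum.swap) (simp add: algebra_simps)
    also have "\<dots> = v i + 2 * colsum n i - 2 * colsum 0 i"
      using sum.lessThan_Suc[of "\<lambda>k. colsum k i" n] sum.lessThan_Suc_shift[of "\<lambda>k. colsum k i" n]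
      unfolding v_def by simp
    finally show "(\<Sum>j<K. P $$ (j,i) * v j) + 1 \<le> v i"
      using n[OF i] colsum_0[OF i] by simp
  qed
  then show ?thesis
    using nonneg unfolding lyapunov_def by blast
qed

lemma ex_lyapunov_if_spectral_radius_less_1:
  assumes subst: "substochastic K P" and rho: "spectral_radius (map_mat complex_of_real P) < 1"
  shows "\<exists>v. lyapunov K P v"
proof -
  have P: "P \<in> carrier_mat K K" and nonneg: "\<And>i j. i < K \<Longrightarrow> j < K \<Longrightarrow> 0 \<le> P $$ (i,j)"
    using subst unfolding substochastic_def by auto
  have "(\<lambda>k. (P ^\<^sub>m k) $$ (i,j)) \<longlonglongrightarrow> 0" if "i < K" "j < K" for i j
  proof -
    have "(\<lambda>k. (map_mat complex_of_real P ^\<^sub>m k) $$ (i,j)) \<longlonglongrightarrow> 0"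
      using P rho that by (intro pow_mat_tendsto_zero[of _ K]) auto
    then show ?thesis
      using P that tendsto_of_real_iff[where 'a=complex, of "\<lambda>k. (P ^\<^sub>m k) $$ (i,j)" 0 sequentially]
      by (simp add: of_real_hom.mat_hom_pow[OF P, symmetric])
  qed
  with P nonneg show ?thesis
    by (rule ex_lyapunov_if_pow_mat_tendsto_zero)
qed

section \<open>Path properties and the reflection map\<close>

lemma continuous_on_imp_cadlag1:
  assumes f: "continuous_on {0..} f"
  shows "cadlag1 f"
  unfolding cadlag1_def
proof (intro conjI allI impI)
  fix t :: real assume "0 \<le> t"
  then have "(f \<longlongrightarrow> f t) (at t within {0..})"
    using f by (simp add: continuous_on_def)
  then show "continuous (at_right t) f"
    unfolding continuous_within by (rule tendsto_within_subset) (use \<open>0 \<le> t\<close> in auto)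
next
  fix t :: real assume t: "0 < t"
  have "(f \<longlongrightarrow> f t) (at t within {0..t})"
    using continuous_on_subset[OF f, of "{0..t}"] t by (auto simp: continuous_on_def)
  then have "(f \<longlongrightarrow> f t) (at_left t)"
    using at_within_Icc_at_left[OF t] by simp
  then show "\<exists>l. (f \<longlongrightarrow> l) (at_left t)" ..
qed

lemma lipschitz_bound_imp_continuous_on:
  fixes f :: "real \<Rightarrow> real"
  assumes lip: "\<And>s t. s \<in> S \<Longrightarrow> t \<in> S \<Longrightarrow> \<bar>f s - f t\<bar> \<le> C * \<bar>s - t\<bar>"
  shows "continuous_on S f"
proof (rule uniformly_continuous_imp_continuous, unfold uniformly_continuous_on_def, intro allI impI)
  fix e :: real assume e: "0 < e"
  show "\<exists>d>0. \<forall>t\<in>S. \<forall>s\<in>S. dist s t < d \<longrightarrow> dist (f s) (f t) < e"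
  proof (intro exI[of _ "e / (\<bar>C\<bar> + 1)"] conjI ballI impI)
    show "0 < e / (\<bar>C\<bar> + 1)" using e by simp
    fix s t assume t: "t \<in> S" and s: "s \<in> S" and st: "dist s t < e / (\<bar>C\<bar> + 1)"
    have "dist (f s) (f t) \<le> \<bar>C\<bar> * dist s t"
      using lip[OF s t] mult_right_mono[OF abs_ge_self[of C], of "\<bar>s - t\<bar>"]
      by (simp add: dist_real_def)
    also have "\<dots> \<le> \<bar>C\<bar> * (e / (\<bar>C\<bar> + 1))"
      using st by (intro mult_left_mono) auto
    also have "\<dots> < e" using e by (simp add: field_simps)
    finally show "dist (f s) (f t) < e" .
  qed
qed

lemma cINF_abs_diff_le:
  fixes f g :: "'a \<Rightarrow> real"
  assumes S: "S \<noteq> {}" and f: "bdd_below (f ` S)" and g: "bdd_below (g ` S)"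
    and fg: "\<And>s. s \<in> S \<Longrightarrow> \<bar>f s - g s\<bar> \<le> M"
  shows "\<bar>(INF s\<in>S. f s) - (INF s\<in>S. g s)\<bar> \<le> M"
proof -
  have "(INF s\<in>S. f s) - M \<le> g s" "(INF s\<in>S. g s) - M \<le> f s" if "s \<in> S" for s
    using cINF_lower[OF f that] cINF_lower[OF g that] fg[OF that] by linarith+
  then have "(INF s\<in>S. f s) - M \<le> (INF s\<in>S. g s)" "(INF s\<in>S. g s) - M \<le> (INF s\<in>S. f s)"
    by (auto intro: cINF_greatest[OF S])
  then show ?thesis by linarith
qed

lemma Phi_abs_diff_le:
  assumes r: "0 \<le> r" and Y: "\<And>s. 0 \<le> s \<Longrightarrow> s \<le> r \<Longrightarrow> Y s i \<le> Y r i"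
    and X: "\<And>s. 0 \<le> s \<Longrightarrow> s \<le> r \<Longrightarrow> 0 \<le> X s i"
    and X': "\<And>s. 0 \<le> s \<Longrightarrow> s \<le> r \<Longrightarrow> 0 \<le> X' s i"
    and M: "\<And>s. 0 \<le> s \<Longrightarrow> s \<le> r \<Longrightarrow> \<bar>X s i - X' s i\<bar> \<le> M"
  shows "\<bar>Phi X Y r i - Phi X' Y r i\<bar> \<le> M"
proof -
  have bdd: "bdd_below ((\<lambda>s. Y r i - Y s i + Z s i) ` {0..r})"
    if "\<And>s. 0 \<le> s \<Longrightarrow> s \<le> r \<Longrightarrow> 0 \<le> Z s i" for Z
    using Y that by (intro bdd_belowI2[where m=0]) simp
  have "\<bar>(INF s\<in>{0..r}. Y r i - Y s i + X s i) - (INF s\<in>{0..r}. Y r i - Y s i + X' s i)\<bar> \<le> M"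
    using r M by (intro cINF_abs_diff_le bdd X X') auto
  then show ?thesis
    unfolding Phi_def using abs_min_diff_le order_trans by fastforce
qed

lemma Phi_linear_service:
  fixes X :: "real \<Rightarrow> nat \<Rightarrow> real"
  assumes t: "0 \<le> t" and mu: "0 \<le> mu i"
    and X: "\<And>s. 0 \<le> s \<Longrightarrow> s \<le> t \<Longrightarrow> 0 \<le> X s i"
    and ratio: "\<And>s. 0 \<le> s \<Longrightarrow> s \<le> t \<Longrightarrow> s * X t i \<le> t * X s i"
  shows "Phi X (\<lambda>t i. mu i * t) t i = min (X t i) (mu i * t)"
proof -
  \<comment> \<open>after a time \<open>s\<close> with \<open>X s i < mu i * s\<close>, the ratio bound lets \<open>X\<close> grow at rate at most \<open>mu i\<close>\<close>
  define f where "f s = mu i * t - mu i * s + X s i" for s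
  have "min (X t i) (mu i * t) \<le> f s" if s: "s \<in> {0..t}" for s
  proof (cases "mu i * s \<le> X s i")
    case True
    then show ?thesis by (simp add: f_def)
  next
    case False
    with X[of s] s have s0: "0 < s" by (cases "s = 0") auto
    have "s * (X t i - X s i) \<le> (t - s) * X s i"
      using ratio[of s] s by (simp add: algebra_simps)
    also have "\<dots> \<le> (t - s) * (mu i * s)"
      using False s by (intro mult_left_mono) auto
    also have "\<dots> = s * ((t - s) * mu i)" by (simp add: algebra_simps)
    finally have "X t i - X s i \<le> (t - s) * mu i"
      using s0 by (simp only: mult_le_cancel_left_pos)
    then show ?thesis by (simp add: f_def algebra_simps)
  qed
  then have "min (X t i) (mu i * t) \<le> (INF s\<in>{0..t}. f s)"
    using t by (intro cINF_greatest) auto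
  moreover have "(INF s\<in>{0..t}. f s) \<le> X t i"
  proof -
    have "0 \<le> f s" if "s \<in> {0..t}" for s
      using X[of s] mult_left_mono[of s t "mu i"] mu that by (simp add: f_def)
    then have "bdd_below (f ` {0..t})"
      by (intro bdd_belowI2[where m=0])
    then show ?thesis using cINF_lower[of f "{0..t}" t] t by (simp add: f_def)
  qed
  ultimately show ?thesis
    unfolding Phi_def f_def[symmetric] by linarith
qed

section \<open>The linear network\<close>

locale linear_network = lyapunov +
  fixes mu lam N :: "nat \<Rightarrow> real"
  assumes mu_nonneg: "\<And>i. i < K \<Longrightarrow> 0 \<le> mu i"
    and lam_nonneg: "\<And>i. i < K \<Longrightarrow> 0 \<le> lam i"
    and N_nonneg: "\<And>i. i < K \<Longrightarrow> 0 \<le> N i"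
begin

definition arrivals :: "real \<Rightarrow> nat \<Rightarrow> real"
  where "arrivals t = xsol K (\<lambda>i. mu i * t) P (\<lambda>i. N i + lam i * t)"

abbreviation departures :: "real \<Rightarrow> nat \<Rightarrow> real"
  where "departures t i \<equiv> min (arrivals t i) (mu i * t)"

lemma arrivals_nonneg: "0 \<le> t \<Longrightarrow> i < K \<Longrightarrow> 0 \<le> arrivals t i"
  unfolding arrivals_def
  by (intro xsol_traffic) (simp_all add: mu_nonneg lam_nonneg N_nonneg)

lemma arrivals_traffic:
  "0 \<le> t \<Longrightarrow> i < K \<Longrightarrow>
    arrivals t i = traffic K (\<lambda>i. mu i * t) P (\<lambda>i. N i + lam i * t) (arrivals t) i"
  unfolding arrivals_def
  by (intro xsol_traffic) (simp_all add: mu_nonneg lam_nonneg N_nonneg)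

lemma arrivals_mono:
  assumes s: "0 \<le> s" and st: "s \<le> t" and i: "i < K"
  shows "arrivals s i \<le> arrivals t i"
proof (rule traffic_comparison[OF _ _ _ i])
  fix j assume j: "j < K"
  show "arrivals s j \<le> traffic K (\<lambda>i. mu i * s) P (\<lambda>i. N i + lam i * s) (arrivals s) j"
    using arrivals_traffic[OF s j] by (rule eq_refl)
  show "traffic K (\<lambda>i. mu i * t) P (\<lambda>i. N i + lam i * t) (arrivals t) j \<le> arrivals t j"
    using arrivals_traffic[OF _ j, of t] s st by (intro eq_refl) simp
  show "N j + lam j * s \<le> N j + lam j * t \<and> mu j * s \<le> mu j * t"
    using st lam_nonneg[OF j] mu_nonneg[OF j] by (simp add: mult_left_mono)
qed

lemma arrivals_ratio_antimono:
  assumes s: "0 \<le> s" and st: "s \<le> t" and i: "i < K"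
  shows "s * arrivals t i \<le> t * arrivals s i"
proof (cases "t = 0")
  case True
  then show ?thesis using s st by simp
next
  case False
  then have t: "0 < t" using s st by simp
  define \<theta> where "\<theta> = s / t"
  have \<theta>: "0 \<le> \<theta>" "\<theta> \<le> 1" "\<theta> * t = s"
    using s st t by (auto simp: \<theta>_def)
  \<comment> \<open>\<open>\<theta> \<cdot> arrivals t\<close> is a subsolution of the traffic equation at time \<open>s = \<theta> t\<close>\<close>
  have sub: "\<theta> * arrivals t j \<le> traffic K (\<lambda>i. mu i * s) P (\<lambda>i. N i + lam i * s) (\<lambda>j. \<theta> * arrivals t j) j"
    if j: "j < K" for j
  proof -
    have "\<theta> * min (arrivals t l) (mu l * t) = min (\<theta> * arrivals t l) (\<theta> * (mu l * t))" for l
      using \<theta>(1) by (simp add: min_mult_distrib_left)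
    moreover have "\<theta> * (mu l * t) = mu l * s" for l
      using \<theta>(3) by (metis mult.left_commute)
    moreover have "\<theta> * arrivals t j
        = \<theta> * N j + lam j * (\<theta> * t) + (\<Sum>l<K. P $$ (l,j) * (\<theta> * min (arrivals t l) (mu l * t)))"
      unfolding arrivals_traffic[OF less_imp_le[OF t] j] traffic_def
      by (simp add: distrib_left sum_distrib_left mult.left_commute)
    ultimately have "\<theta> * arrivals t j
        = \<theta> * N j + lam j * s + (\<Sum>l<K. P $$ (l,j) * min (\<theta> * arrivals t l) (mu l * s))"
      using \<theta>(3) by (simp only:)
    also have "\<dots> \<le> traffic K (\<lambda>i. mu i * s) P (\<lambda>i. N i + lam i * s) (\<lambda>j. \<theta> * arrivals t j) j"
      using \<theta> N_nonneg[OF j] mult_left_le_one_le[of "N j" \<theta>] by (simp add: traffic_def)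
    finally show ?thesis .
  qed
  have "\<theta> * arrivals t i \<le> arrivals s i"
  proof (rule traffic_comparison[OF sub _ _ i])
    fix j assume j: "j < K"
    show "traffic K (\<lambda>i. mu i * s) P (\<lambda>i. N i + lam i * s) (arrivals s) j \<le> arrivals s j"
      using arrivals_traffic[OF s j] by (rule eq_refl[OF sym])
  qed auto
  then show ?thesis using t by (simp add: \<theta>_def field_simps)
qed

lemma continuous_on_arrivals:
  assumes i: "i < K"
  shows "continuous_on {0..} (\<lambda>t. arrivals t i)"
proof -
  define L where "L = (\<Sum>j<K. lam j + (\<Sum>l<K. P $$ (l,j) * mu l))"
  have rate_le_L: "lam j + (\<Sum>l<K. P $$ (l,j) * mu l) \<le> L" if j: "j < K" for j
    unfolding L_def using j P_nonneg lam_nonneg mu_nonneg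
    by (intro member_le_sum) (auto intro!: add_nonneg_nonneg sum_nonneg)
  have "\<bar>arrivals s i - arrivals t i\<bar> \<le> (L * v i) * \<bar>s - t\<bar>" if "0 \<le> s" "0 \<le> t" for s t
  proof -
    have "\<bar>(N j + lam j * s) - (N j + lam j * t)\<bar> + (\<Sum>l<K. P $$ (l,j) * \<bar>mu l * s - mu l * t\<bar>)
        \<le> L * \<bar>s - t\<bar>" if j: "j < K" for j
    proof -
      have "\<bar>(N j + lam j * s) - (N j + lam j * t)\<bar> + (\<Sum>l<K. P $$ (l,j) * \<bar>mu l * s - mu l * t\<bar>)
          = (lam j + (\<Sum>l<K. P $$ (l,j) * mu l)) * \<bar>s - t\<bar>"
        using lam_nonneg[OF j] mu_nonneg
        by (simp add: abs_mult distrib_right sum_distrib_right mult.assoc flip: right_diff_distrib)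
      also have "\<dots> \<le> L * \<bar>s - t\<bar>"
        using rate_le_L[OF j] by (rule mult_right_mono) simp
      finally show ?thesis .
    qed
    with arrivals_traffic[OF \<open>0 \<le> s\<close>] arrivals_traffic[OF \<open>0 \<le> t\<close>] i
    have "\<bar>arrivals s i - arrivals t i\<bar> \<le> L * \<bar>s - t\<bar> * v i"
      by (intro traffic_fixpoint_lipschitz) auto
    then show ?thesis by (simp add: algebra_simps)
  qed
  then show ?thesis by (intro lipschitz_bound_imp_continuous_on) auto
qed

lemma Phi_arrivals:
  assumes "0 \<le> t" "i < K"
  shows "Phi arrivals (\<lambda>t i. mu i * t) t i = departures t i"
  using assms by (intro Phi_linear_service mu_nonneg arrivals_nonneg arrivals_ratio_antimono) auto

lemma arrivals_in_DK: "arrivals \<in> DK K"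
  unfolding DK_def D1_def
  using continuous_on_imp_cadlag1[OF continuous_on_arrivals] arrivals_mono arrivals_nonneg
  by blast

lemma departures_in_D0K: "departures \<in> D0K K"
  unfolding D0K_def D0_1_def D1_def
proof (intro CollectI allI impI conjI)
  fix i assume i: "i < K"
  show "cadlag1 (\<lambda>t. min (arrivals t i) (mu i * t))"
    using continuous_on_arrivals[OF i]
    by (intro continuous_on_imp_cadlag1 continuous_intros)
  show "min (arrivals s i) (mu i * s) \<le> min (arrivals t i) (mu i * t)" if "0 \<le> s" "s \<le> t" for s t
    using arrivals_mono[OF that i] mult_left_mono[OF \<open>s \<le> t\<close> mu_nonneg[OF i]]
    by (rule min.mono)
  show "0 \<le> min (arrivals t i) (mu i * t)" if "0 \<le> t" for t
    using that i arrivals_nonneg mu_nonneg by simp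
  show "min (arrivals 0 i) (mu i * 0) = 0"
    using i arrivals_nonneg by simp
qed

lemma fixpoint_unique:
  assumes A: "A \<in> DK K"
    and fp: "\<And>t i. 0 \<le> t \<Longrightarrow> i < K \<Longrightarrow>
      A t i = Gamma K D (\<lambda>i j t. P $$ (i,j) * t) (\<lambda>t i. N i + lam i * t) t i \<and>
      D t i = Phi A (\<lambda>t i. mu i * t) t i"
    and t: "0 \<le> t" and i: "i < K"
  shows "A t i = arrivals t i \<and> D t i = departures t i"
proof -
  have A_mono: "A s j \<le> A r j" and A_nonneg: "0 \<le> A s j" if "0 \<le> s" "s \<le> r" "j < K" for s r j
    using A that unfolding DK_def D1_def by blast+
  \<comment> \<open>\<^const>\<open>Phi\<close> is 1-Lipschitz for the sup norm, which makes \<open>M\<close> subinvariant\<close>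
  define M where "M j = (SUP s\<in>{0..t}. \<bar>A s j - arrivals s j\<bar>)" for j
  have M_ge: "\<bar>A s j - arrivals s j\<bar> \<le> M j" if s: "s \<in> {0..t}" and j: "j < K" for s j
  proof -
    have "\<bar>A s j - arrivals s j\<bar> \<le> A t j + arrivals t j" if s: "s \<in> {0..t}" for s
      using A_mono[of s t j] A_nonneg[of s t j] arrivals_mono[of s t j] arrivals_nonneg[of s j] s j
      by auto
    then show ?thesis
      unfolding M_def using s by (intro cSUP_upper bdd_aboveI2) auto
  qed
  have D_close: "\<bar>D r j - departures r j\<bar> \<le> M j" if r: "r \<in> {0..t}" and j: "j < K" for r j
  proof -
    have "\<bar>Phi A (\<lambda>t i. mu i * t) r j - Phi arrivals (\<lambda>t i. mu i * t) r j\<bar> \<le> M j"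
      using r j A_nonneg arrivals_nonneg mu_nonneg[OF j] M_ge
      by (intro Phi_abs_diff_le) (auto intro: mult_left_mono)
    then show ?thesis using fp[of r j] Phi_arrivals[of r j] r j by simp
  qed
  have "M j \<le> (\<Sum>l<K. P $$ (l,j) * M l)" if j: "j < K" for j
    unfolding M_def[of j]
  proof (rule cSUP_least)
    show "{0..t} \<noteq> {}" using t by simp
    fix r assume r: "r \<in> {0..t}"
    have "A r j - arrivals r j = (\<Sum>l<K. P $$ (l,j) * (D r l - departures r l))"
      using fp[of r j] arrivals_traffic[of r j] r j
      by (simp add: Gamma_def traffic_def sum_subtractf algebra_simps)
    then have "\<bar>A r j - arrivals r j\<bar> \<le> (\<Sum>l<K. \<bar>P $$ (l,j) * (D r l - departures r l)\<bar>)"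
      by (simp only: sum_abs)
    also have "\<dots> \<le> (\<Sum>l<K. P $$ (l,j) * M l)"
      using P_nonneg j D_close[OF r] by (intro sum_mono) (simp add: abs_mult mult_left_mono)
    finally show "\<bar>A r j - arrivals r j\<bar> \<le> (\<Sum>l<K. P $$ (l,j) * M l)" .
  qed
  then have "M i \<le> 0" by (rule subinvariant_nonpos[OF _ i])
  then show ?thesis
    using M_ge[of t i] D_close[of t i] t i by auto
qed

end

theorem mainTheorem3:
  fixes K :: nat and P :: "real mat" and mu lam N :: "nat \<Rightarrow> real"
  assumes subst: "substochastic K P"
    and rho: "spectral_radius (map_mat complex_of_real P) < 1"
    and nonneg: "\<forall>i<K. 0 \<le> mu i \<and> 0 \<le> lam i \<and> 0 \<le> N i"
  defines "NN \<equiv> (\<lambda>t i. N i + lam i * t)"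
    and "SS \<equiv> (\<lambda>t i. mu i * t)"
    and "PP \<equiv> (\<lambda>i j t. P $$ (i,j) * t)"
    and "A0 \<equiv> (\<lambda>t. xsol K (\<lambda>i. mu i * t) P (\<lambda>i. N i + lam i * t))"
    and "D0 \<equiv> (\<lambda>t i. min (xsol K (\<lambda>i. mu i * t) P (\<lambda>i. N i + lam i * t) i) (mu i * t))"
  shows "A0 \<in> DK K \<and> D0 \<in> D0K K \<and>
         (\<forall>t\<ge>0. \<forall>i<K. A0 t i = Gamma K D0 PP NN t i \<and> D0 t i = Phi A0 SS t i) \<and>
         (\<forall>A D. A \<in> DK K \<and> D \<in> D0K K \<and>
            (\<forall>t\<ge>0. \<forall>i<K. A t i = Gamma K D PP NN t i \<and> D t i = Phi A SS t i)
            \<longrightarrow> (\<forall>t\<ge>0. \<forall>i<K. A t i = A0 t i \<and> D t i = D0 t i))"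
proof -
  obtain v where "lyapunov K P v"
    using ex_lyapunov_if_spectral_radius_less_1[OF subst rho] by blast
  then interpret linear_network K P v mu lam N
    using nonneg by (intro linear_network.intro linear_network_axioms.intro) auto
  have A0: "A0 = arrivals" and D0: "D0 = departures"
    unfolding A0_def D0_def arrivals_def by simp_all
  have "A0 t i = Gamma K D0 PP NN t i" if "0 \<le> t" "i < K" for t i
    using arrivals_traffic[OF that]
    unfolding A0 D0 Gamma_def PP_def NN_def traffic_def by simp
  moreover have "D0 t i = Phi A0 SS t i" if "0 \<le> t" "i < K" for t i
    unfolding A0 D0 SS_def using Phi_arrivals[OF that] by simp
  ultimately show ?thesis
    using arrivals_in_DK departures_in_D0K fixpoint_unique
    unfolding A0 D0 PP_def NN_def SS_def by blast
qed

end
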